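(* Let $G$ be a finite simple graph of order $n$ and size $m$ whose adjacency matrix $A(G)$ is non-singular, let $\bar d=2m/n$, and let $\mu_1\ge\mu_2$ be the two largest values among the absolute values of the eigenvalues of $A(G)$ (counted with multiplicity). If \[(\mu_1-\bar{d})+\frac{2m-n+1-\mu_1^2}{2\mu_2+1}\geq\frac{2\mu_2}{2\mu_2+1}\ln\mu_1,\] then $\mathcal{E}(G)\geq n-1+\bar{d}$, unless $G$ is isomorphic to the path $P_4$ or to the paw $H$.
   Context: For a finite simple graph $G$, $A(G)$ is its adjacency matrix with eigenvalues $\lambda_1\ge\cdots\ge\lambda_n$, and the energy is $\mathcal{E}(G)=\sum_{i=1}^n|\lambda_i|$. $G$ is non-singular if $A(G)$ is non-singular. $P_4$ is the path on 4 vertices, and the paw $H$ is the graph on 4 vertices consisting of a triangle together with one extra vertex adjacent to exactly one vertex of the triangle. *)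

theory Defs
  imports "Jordan_Normal_Form.Char_Poly" "Jordan_Normal_Form.Determinant"
begin

definition simple_graph :: "nat \<Rightarrow> (nat \<Rightarrow> nat \<Rightarrow> bool) \<Rightarrow> bool" where
  "simple_graph n E \<longleftrightarrow> (\<forall>i j. E i j \<longrightarrow> i < n \<and> j < n) \<and>
     (\<forall>i j. E i j \<longrightarrow> E j i) \<and> (\<forall>i. \<not> E i i)"

definition adj_matrix :: "nat \<Rightarrow> (nat \<Rightarrow> nat \<Rightarrow> bool) \<Rightarrow> real mat" where
  "adj_matrix n E = mat n n (\<lambda>(i,j). if E i j then 1 else 0)"

definition num_edges :: "nat \<Rightarrow> (nat \<Rightarrow> nat \<Rightarrow> bool) \<Rightarrow> nat" where
  "num_edges n E = card {(i,j). i < j \<and> j < n \<and> E i j}"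

definition eigenvalue_list :: "real mat \<Rightarrow> real list \<Rightarrow> bool" where
  "eigenvalue_list A es \<longleftrightarrow> char_poly A = (\<Prod>e\<leftarrow>es. [:- e, 1:])"

definition energy :: "real list \<Rightarrow> real" where
  "energy es = sum_list (map abs es)"

definition abs_desc :: "real list \<Rightarrow> real list" where
  "abs_desc es = rev (sort (map abs es))"

definition mu1 :: "real list \<Rightarrow> real" where "mu1 es = abs_desc es ! 0"
definition mu2 :: "real list \<Rightarrow> real" where "mu2 es = abs_desc es ! 1"

definition graph_iso :: "nat \<Rightarrow> (nat \<Rightarrow> nat \<Rightarrow> bool) \<Rightarrow> nat \<Rightarrow> (nat \<Rightarrow> nat \<Rightarrow> bool) \<Rightarrow> bool" where
  "graph_iso n E k F \<longleftrightarrow> (\<exists>f. bij_betw f {0..<n} {0..<k} \<and>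
     (\<forall>i<n. \<forall>j<n. E i j \<longleftrightarrow> F (f i) (f j)))"

definition P4 :: "nat \<Rightarrow> nat \<Rightarrow> bool" where
  "P4 i j \<longleftrightarrow> {i,j} \<in> {{0,1},{1,2},{2,3::nat}} \<and> i \<noteq> j"

definition paw :: "nat \<Rightarrow> nat \<Rightarrow> bool" where
  "paw i j \<longleftrightarrow> {i,j} \<in> {{0,1},{1,2},{0,2},{0,3::nat}} \<and> i \<noteq> j"

end

theory Submission
  imports Defs "Jordan_Normal_Form.Schur_Decomposition" "HOL-Analysis.Convex"
begin

(* Let mu1 >= mu2 >= ... >= mu_n be the absolute values of the eigenvalues; they are nonzero.
   Three facts about them are used: their product is |det A| >= 1, since det A is a nonzero
   integer; their squares sum to tr A^2 = 2m; and mu1 >= d = 2m/n, because Cauchy-Schwarz and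
   repeated squaring give 1'A^k 1 >= n d^k for k = 2^j, while 1'A^k 1 <= n tr A^k <= n^2 mu1^k.
   With t = mu2, every x = mu_i (i >= 2) lies in (0, t] and so satisfies
   2t ln x + x^2 + (2t + c - 1) <= (2t + c) x, where c = 1 if t <= 1 and c = 2 otherwise.
   Summing this over i >= 2 and combining it with the three facts and the hypothesis gives
   (2t + c) (E - (n - 1 + d)) >= (c - 1) (mu1 - d) + 2t ln (mu1 ... mu_n) >= 0. *)

section \<open>Real inequalities\<close>

lemma ln_le_quadratic_taylor:
  fixes x :: real
  assumes "0 < x" "x \<le> 1"
  shows "ln x \<le> (x - 1) - (x - 1)\<^sup>2 / 2"
proof -
  let ?f = "\<lambda>y::real. (y - 1) - (y - 1)\<^sup>2 / 2 - ln y"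
  have "?f 1 \<le> ?f x"
  proof (rule DERIV_nonpos_imp_nonincreasing[of x 1 ?f])
    fix y :: real
    assume "x \<le> y" "y \<le> 1"
    with assms have "0 < y" by linarith
    have "(?f has_real_derivative (1 - (y - 1) - 1 / y)) (at y)"
      using \<open>0 < y\<close> by (auto intro!: derivative_eq_intros simp: field_simps)
    moreover have "1 - (y - 1) - 1 / y = - ((y - 1)\<^sup>2 / y)"
      using \<open>0 < y\<close> by (simp add: field_simps power2_eq_square)
    moreover have "0 \<le> (y - 1)\<^sup>2 / y"
      using \<open>0 < y\<close> by simp
    ultimately show "\<exists>d. (?f has_real_derivative d) (at y) \<and> d \<le> 0"
      by (intro exI[of _ "1 - (y - 1) - 1 / y"]) auto
  qed (use assms in auto)
  then show ?thesis
    by simp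
qed

lemma le_if_frequently_power_le:
  fixes a b C :: real
  assumes "0 \<le> b" and freq: "\<exists>\<^sub>F m in sequentially. a ^ m \<le> C * b ^ m"
  shows "a \<le> b"
proof (rule ccontr)
  assume "\<not> a \<le> b"
  then have "0 < a" "0 \<le> b / a" "b / a < 1"
    using \<open>0 \<le> b\<close> by auto
  then have "(\<lambda>m. C * (b / a) ^ m) \<longlonglongrightarrow> C * 0"
    using \<open>0 \<le> b\<close> by (intro tendsto_mult_left LIMSEQ_power_zero) auto
  then have "\<forall>\<^sub>F m in sequentially. C * (b / a) ^ m < 1"
    by (intro order_tendstoD(2)) auto
  with freq have "\<exists>\<^sub>F m in sequentially. a ^ m \<le> C * b ^ m \<and> C * (b / a) ^ m < 1"
    by (rule frequently_eventually_frequently)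
  then obtain m where "a ^ m \<le> C * b ^ m" "C * (b / a) ^ m < 1"
    using frequently_ex by blast
  moreover have "C * b ^ m = C * (b / a) ^ m * a ^ m"
    using \<open>0 < a\<close> by (simp add: power_divide)
  moreover have "C * (b / a) ^ m * a ^ m < 1 * a ^ m"
    using \<open>0 < a\<close> \<open>C * (b / a) ^ m < 1\<close> by (intro mult_strict_right_mono) auto
  ultimately have "a ^ m < a ^ m"
    by linarith
  then show False
    by simp
qed

lemma log_quadratic_le_small:
  fixes x t :: real
  assumes "0 < x" "x \<le> t" "t \<le> 1"
  shows "2 * t * ln x + x\<^sup>2 + 2 * t \<le> (2 * t + 1) * x"
proof -
  have "2 * t * ln x \<le> 2 * t * (x - 1)"
    using assms ln_le_minus_one[of x] by (intro mult_left_mono) auto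
  moreover have "x\<^sup>2 \<le> x"
    using assms by (simp add: power2_eq_square mult_le_cancel_left1)
  ultimately show ?thesis
    by (simp add: algebra_simps)
qed

lemma log_quadratic_le_large:
  fixes x t :: real
  assumes "0 < x" "x \<le> t" "1 \<le> t"
  shows "2 * t * ln x + x\<^sup>2 + 2 * t + 1 \<le> (2 * t + 2) * x"
proof (cases "x \<le> 1")
  case True
  have "2 * t * ln x \<le> 2 * t * ((x - 1) - (x - 1)\<^sup>2 / 2)"
    using assms True ln_le_quadratic_taylor[of x] by (intro mult_left_mono) auto
  moreover have "(x - 1)\<^sup>2 \<le> t * (x - 1)\<^sup>2"
    using assms by (simp add: mult_le_cancel_right1)
  moreover have "(2 * t + 2) * x - (2 * t * ln x + x\<^sup>2 + 2 * t + 1)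
      = (2 * t * ((x - 1) - (x - 1)\<^sup>2 / 2) - 2 * t * ln x) + (t * (x - 1)\<^sup>2 - (x - 1)\<^sup>2)"
    by (simp add: field_simps power2_eq_square)
  ultimately show ?thesis
    by linarith
next
  case False
  \<comment> \<open>\<open>ln x \<le> sinh (ln x)\<close> for \<open>x \<ge> 1\<close>\<close>
  have "ln x \<le> (x - 1 / x) / 2"
    using False real_le_x_sinh[of "ln x"] by (simp add: exp_minus inverse_eq_divide)
  then have "2 * t * ln x \<le> 2 * t * ((x - 1 / x) / 2)"
    using assms by (intro mult_left_mono) auto
  moreover have "0 \<le> (x - 1)\<^sup>2 * (t - x) / x"
    using assms by simp
  moreover have "(2 * t + 2) * x - (2 * t * ln x + x\<^sup>2 + 2 * t + 1)
      = (2 * t * ((x - 1 / x) / 2) - 2 * t * ln x) + (x - 1)\<^sup>2 * (t - x) / x"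
    using assms by (simp add: field_simps power2_eq_square)
  ultimately show ?thesis
    by linarith
qed

lemma log_quadratic_bound:
  fixes t :: real
  assumes "0 \<le> t"
  obtains c where "1 \<le> c"
    "\<And>x. 0 < x \<Longrightarrow> x \<le> t \<Longrightarrow> 2 * t * ln x + x\<^sup>2 + (2 * t + c - 1) \<le> (2 * t + c) * x"
proof (cases "t \<le> 1")
  case True
  then show ?thesis
    using that[of 1] log_quadratic_le_small by auto
next
  case False
  then show ?thesis
    using that[of 2] log_quadratic_le_large[of _ t] by (auto simp: algebra_simps)
qed

lemma ln_prod_list:
  fixes xs :: "real list"
  shows "(\<And>x. x \<in> set xs \<Longrightarrow> 0 < x) \<Longrightarrow> ln (prod_list xs) = (\<Sum>x\<leftarrow>xs. ln x)"
  by (induction xs) (auto simp: ln_mult prod_list_zero_iff)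

lemma prod_list_pos:
  fixes xs :: "real list"
  shows "(\<And>x. x \<in> set xs \<Longrightarrow> 0 < x) \<Longrightarrow> 0 < prod_list xs"
  by (induction xs) auto

lemma sum_lower_bound_of_product_and_squares:
  fixes mu t M :: real and xs :: "real list" and n :: nat
  assumes xs: "\<And>x. x \<in> set xs \<Longrightarrow> 0 < x \<and> x \<le> t" and "0 \<le> t"
    and prod: "1 \<le> mu * prod_list xs"
    and squares: "mu\<^sup>2 + (\<Sum>x\<leftarrow>xs. x\<^sup>2) = M"
    and n: "n = length xs + 1"
    and avg: "M / n \<le> mu"
    and H: "(mu - M / n) + (M - n + 1 - mu\<^sup>2) / (2 * t + 1) \<ge> (2 * t) / (2 * t + 1) * ln mu"
  shows "real n - 1 + M / n \<le> mu + sum_list xs"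
proof -
  obtain c where "1 \<le> c"
    and pointwise: "\<And>x. 0 < x \<Longrightarrow> x \<le> t \<Longrightarrow> 2 * t * ln x + x\<^sup>2 + (2 * t + c - 1) \<le> (2 * t + c) * x"
    using log_quadratic_bound[OF \<open>0 \<le> t\<close>] by blast
  define L where "L = (\<Sum>x\<leftarrow>xs. ln x)"
  define S1 where "S1 = sum_list xs"
  define S2 where "S2 = (\<Sum>x\<leftarrow>xs. x\<^sup>2)"
  define N where "N = real (length xs)"
  have "0 < prod_list xs"
    using xs by (intro prod_list_pos) auto
  moreover have "0 < mu * prod_list xs"
    using prod by linarith
  ultimately have "0 < mu"
    by (simp add: zero_less_mult_iff)
  have "0 \<le> ln (mu * prod_list xs)"
    using prod by simp
  also have "\<dots> = ln mu + L"
    using \<open>0 < mu\<close> \<open>0 < prod_list xs\<close> xs by (simp add: ln_mult_pos ln_prod_list L_def)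
  finally have log_sum: "0 \<le> ln mu + L" .
  have "0 < 2 * t + 1"
    using \<open>0 \<le> t\<close> by simp
  have clear_denominator: "c * l \<le> D * a + b" if "0 < D" "c / D * l \<le> a + b / D" for a b c l D :: real
    using that by (simp add: field_simps)
  have H': "2 * t * ln mu \<le> (2 * t + 1) * (mu - M / n) + (M - n + 1 - mu\<^sup>2)"
    using clear_denominator[OF \<open>0 < 2 * t + 1\<close> H] by simp
  have "(\<Sum>x\<leftarrow>xs. 2 * t * ln x + x\<^sup>2 + (2 * t + c - 1)) \<le> (\<Sum>x\<leftarrow>xs. (2 * t + c) * x)"
    using xs pointwise by (intro sum_list_mono) auto
  then have summed: "2 * t * L + S2 + N * (2 * t + c - 1) \<le> (2 * t + c) * S1"
    by (simp add: sum_list_addf sum_list_const_mult sum_list_mult_const sum_list_triv L_def S1_def S2_def N_def)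
  have "real n = N + 1"
    using n by (simp add: N_def)
  \<comment> \<open>every summand on the right is nonnegative\<close>
  have "(2 * t + c) * (mu + S1 - N - M / n)
      = (c - 1) * (mu - M / n) + 2 * t * (ln mu + L)
        + (((2 * t + 1) * (mu - M / n) + (M - N - mu\<^sup>2)) - 2 * t * ln mu)
        + ((2 * t + c) * S1 - (2 * t * L + S2 + N * (2 * t + c - 1))) + (mu\<^sup>2 + S2 - M)"
    by (simp add: algebra_simps flip: add_divide_distrib)
  moreover have "0 \<le> (c - 1) * (mu - M / n)" "0 \<le> 2 * t * (ln mu + L)"
    using \<open>1 \<le> c\<close> avg \<open>0 \<le> t\<close> log_sum by simp_all
  moreover have "mu\<^sup>2 + S2 = M"
    using squares by (simp add: S2_def)
  ultimately have "0 \<le> (2 * t + c) * (mu + S1 - N - M / n)"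
    using H' summed \<open>real n = N + 1\<close> by linarith
  then have "0 \<le> mu + S1 - N - M / n"
    using \<open>0 \<le> t\<close> \<open>1 \<le> c\<close> by (simp add: zero_le_mult_iff)
  then show ?thesis
    using \<open>real n = N + 1\<close> by (simp add: S1_def)
qed

lemma mset_abs_desc: "mset (abs_desc es) = mset (map abs es)"
  by (simp add: abs_desc_def)

lemma set_abs_desc: "set (abs_desc es) = abs ` set es"
  using mset_eq_setD[OF mset_abs_desc] by simp

lemma energy_eq_sum_list_abs_desc: "energy es = sum_list (abs_desc es)"
  by (metis energy_def mset_abs_desc sum_mset_sum_list)

lemma sum_list_power_abs_desc: "(\<Sum>x\<leftarrow>abs_desc es. x ^ k) = (\<Sum>e\<leftarrow>es. \<bar>e\<bar> ^ k)"
proof -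
  have "mset (map (\<lambda>x. x ^ k) (abs_desc es)) = mset (map (\<lambda>e. \<bar>e\<bar> ^ k) es)"
    by (simp add: mset_abs_desc multiset.map_comp o_def)
  then show ?thesis
    by (metis sum_mset_sum_list)
qed

lemma prod_list_abs_desc: "prod_list (abs_desc es) = \<bar>prod_list es\<bar>"
proof -
  have "prod_list (abs_desc es) = prod_list (map abs es)"
    by (metis mset_abs_desc prod_mset_prod_list)
  also have "\<dots> = \<bar>prod_list es\<bar>"
    by (induction es) (auto simp: abs_mult)
  finally show ?thesis .
qed

lemma sorted_abs_desc: "sorted_wrt (\<ge>) (abs_desc es)"
  by (simp add: abs_desc_def sorted_wrt_rev)

lemma abs_le_mu1:
  assumes "e \<in> set es"
  shows "\<bar>e\<bar> \<le> mu1 es"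
proof -
  have "\<bar>e\<bar> \<in> set (abs_desc es)"
    using assms by (simp add: set_abs_desc)
  then obtain rest where "abs_desc es = mu1 es # rest"
    by (metis mu1_def list.exhaust_sel empty_iff list.set(1) nth_Cons_0)
  then show ?thesis
    using sorted_abs_desc[of es] \<open>\<bar>e\<bar> \<in> set (abs_desc es)\<close> by auto
qed

lemma abs_desc_Cons_Cons:
  assumes "2 \<le> length es"
  obtains rest where "abs_desc es = mu1 es # mu2 es # rest" "\<forall>x\<in>set rest. x \<le> mu2 es"
proof -
  have "2 \<le> length (abs_desc es)"
    using assms by (simp add: abs_desc_def)
  then obtain a b rest where ab: "abs_desc es = a # b # rest"
    by (metis Suc_le_length_iff numeral_2_eq_2)
  then have "a = mu1 es" "b = mu2 es"
    by (simp_all add: mu1_def mu2_def)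
  then show ?thesis
    using that sorted_abs_desc[of es] ab by auto
qed

section \<open>Trace, determinant and spectrum\<close>

definition trace :: "'a::comm_monoid_add mat \<Rightarrow> 'a" where
  "trace A = (\<Sum>i\<in>{0..<dim_row A}. A $$ (i, i))"

lemma trace_mult_comm:
  fixes A B :: "'a::comm_semiring_0 mat"
  assumes "A \<in> carrier_mat n m" "B \<in> carrier_mat m n"
  shows "trace (A * B) = trace (B * A)"
proof -
  have "trace (A * B) = (\<Sum>i\<in>{0..<n}. \<Sum>l\<in>{0..<m}. A $$ (i, l) * B $$ (l, i))"
    using assms by (auto simp: trace_def scalar_prod_def intro!: sum.cong)
  also have "\<dots> = (\<Sum>l\<in>{0..<m}. \<Sum>i\<in>{0..<n}. B $$ (l, i) * A $$ (i, l))"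
    by (subst sum.swap) (simp add: mult.commute)
  also have "\<dots> = trace (B * A)"
    using assms by (auto simp: trace_def scalar_prod_def intro!: sum.cong)
  finally show ?thesis .
qed

lemma trace_similar:
  fixes A B :: "'a::comm_semiring_1 mat"
  assumes "similar_mat_wit A B P Q"
  shows "trace A = trace B"
proof -
  note sim = similar_mat_witD[OF refl assms]
  have "trace A = trace (P * (B * Q))"
    using sim(3) assoc_mult_mat[OF sim(6,5,7)] by simp
  also have "\<dots> = trace (B * Q * P)"
    using sim(5-7) by (intro trace_mult_comm) auto
  also have "B * Q * P = B * (Q * P)"
    by (rule assoc_mult_mat[OF sim(5,7,6)])
  also have "\<dots> = B"
    using sim(2,5) by simp
  finally show ?thesis .
qed

lemma upper_triangular_mult:
  fixes X Y :: "'a::semiring_0 mat"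
  assumes X: "X \<in> carrier_mat n n" and Y: "Y \<in> carrier_mat n n"
    and "upper_triangular X" "upper_triangular Y"
  shows "upper_triangular (X * Y)"
    and "i < n \<Longrightarrow> (X * Y) $$ (i, i) = X $$ (i, i) * Y $$ (i, i)"
proof -
  have vanish: "X $$ (i, l) * Y $$ (l, j) = 0" if "i < n" "l < n" "j < n" "j < i \<or> l \<noteq> j \<and> i = j" for i l j
    using that assms by (cases "l < i") (auto simp: upper_triangular_def)
  show "upper_triangular (X * Y)"
    using X Y vanish by (auto simp: scalar_prod_def intro!: sum.neutral)
  show "(X * Y) $$ (i, i) = X $$ (i, i) * Y $$ (i, i)" if "i < n"
  proof -
    have "(X * Y) $$ (i, i) = (\<Sum>l\<in>{0..<n}. X $$ (i, l) * Y $$ (l, i))"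
      using that X Y by (simp add: scalar_prod_def)
    also have "\<dots> = (\<Sum>l\<in>{0..<n}. if l = i then X $$ (i, i) * Y $$ (i, i) else 0)"
      using that vanish[of i _ i] by (intro sum.cong) auto
    finally show ?thesis
      using that by simp
  qed
qed

lemma upper_triangular_pow:
  fixes B :: "'a::comm_semiring_1 mat"
  assumes B: "B \<in> carrier_mat n n" and "upper_triangular B"
  shows "upper_triangular (B ^\<^sub>m k)" and "i < n \<Longrightarrow> (B ^\<^sub>m k) $$ (i, i) = (B $$ (i, i)) ^ k"
proof -
  have "upper_triangular (B ^\<^sub>m k) \<and> (\<forall>i<n. (B ^\<^sub>m k) $$ (i, i) = (B $$ (i, i)) ^ k)"
  proof (induction k)
    case 0
    then show ?case
      using B by auto
  next
    case (Suc k)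
    then show ?case
      using upper_triangular_mult[OF pow_carrier_mat[OF B] B] assms by (auto simp: mult.commute)
  qed
  then show "upper_triangular (B ^\<^sub>m k)" "i < n \<Longrightarrow> (B ^\<^sub>m k) $$ (i, i) = (B $$ (i, i)) ^ k"
    by auto
qed

lemma spectral_invariants:
  fixes A :: "'a::conjugatable_ordered_field mat"
  assumes A: "A \<in> carrier_mat n n" and cp: "char_poly A = (\<Prod>e\<leftarrow>es. [:- e, 1:])"
  shows "length es = n" and "det A = prod_list es" and "trace (A ^\<^sub>m k) = (\<Sum>e\<leftarrow>es. e ^ k)"
proof -
  obtain B P Q where "schur_decomposition A es = (B, P, Q)"
    by (cases "schur_decomposition A es")
  with schur_decomposition[OF A cp] have sim: "similar_mat_wit A B P Q"
    and ut: "upper_triangular B" and diag: "diag_mat B = es"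
    by auto
  have B: "B \<in> carrier_mat n n"
    using similar_mat_witD2[OF A sim] by simp
  then have es: "es = map (\<lambda>i. B $$ (i, i)) [0..<n]"
    using diag by (auto simp: diag_mat_def)
  then show "length es = n"
    by simp
  have "det A = det B"
    using sim det_similar by (auto simp: similar_mat_def)
  then show "det A = prod_list es"
    using det_upper_triangular[OF ut B] diag by simp
  have "trace (A ^\<^sub>m k) = trace (B ^\<^sub>m k)"
    by (rule trace_similar[OF similar_mat_wit_pow[OF sim]])
  also have "\<dots> = (\<Sum>i\<in>{0..<n}. (B $$ (i, i)) ^ k)"
    using B upper_triangular_pow(2)[OF B ut] by (simp add: trace_def)
  also have "\<dots> = (\<Sum>e\<leftarrow>es. e ^ k)"
    by (simp add: es sum_list_sum_nth)
  finally show "trace (A ^\<^sub>m k) = (\<Sum>e\<leftarrow>es. e ^ k)" .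
qed

section \<open>Entry sums of powers of symmetric matrices\<close>

lemma pow_mat_add:
  fixes A :: "'a::semiring_1 mat"
  assumes "A \<in> carrier_mat n n"
  shows "A ^\<^sub>m (k + l) = A ^\<^sub>m k * A ^\<^sub>m l"
proof (induction l)
  case (Suc l)
  have "A ^\<^sub>m (k + Suc l) = A ^\<^sub>m k * A ^\<^sub>m l * A"
    using Suc by simp
  also have "\<dots> = A ^\<^sub>m k * A ^\<^sub>m Suc l"
    using assms by (simp add: assoc_mult_mat[of _ n n _ n _ n])
  finally show ?case .
qed (use assms in simp)

lemma pow_mat_commute:
  fixes A :: "'a::semiring_1 mat"
  assumes "A \<in> carrier_mat n n"
  shows "A * A ^\<^sub>m k = A ^\<^sub>m k * A"
  using pow_mat_add[OF assms, of 1 k] pow_mat_add[OF assms, of k 1] assms by simp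

lemma transpose_pow_mat:
  fixes A :: "'a::comm_semiring_1 mat"
  assumes "A \<in> carrier_mat n n"
  shows "(A ^\<^sub>m k)\<^sup>T = A\<^sup>T ^\<^sub>m k"
proof (induction k)
  case 0
  then show ?case
    using assms by simp
next
  case (Suc k)
  have "(A ^\<^sub>m Suc k)\<^sup>T = A\<^sup>T * (A ^\<^sub>m k)\<^sup>T"
    using assms by (simp add: transpose_mult[of _ n n _ n])
  also have "\<dots> = A\<^sup>T ^\<^sub>m Suc k"
    using Suc pow_mat_commute[of "A\<^sup>T" n k] assms by simp
  finally show ?case .
qed

lemma sum_mat_carrier:
  assumes "A \<in> carrier_mat n m"
  shows "sum_mat A = (\<Sum>i\<in>{0..<n}. \<Sum>j\<in>{0..<m}. A $$ (i, j))"
  using assms by (simp add: sum_mat_def sum.cartesian_product)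

lemma symmetric_mat_entry:
  assumes "S \<in> carrier_mat n n" "S\<^sup>T = S" "i < n" "j < n"
  shows "S $$ (j, i) = S $$ (i, j)"
  by (metis assms carrier_matD index_transpose_mat(1))

lemma sum_mat_mult_self_symmetric:
  fixes S :: "'a::comm_semiring_1 mat"
  assumes S: "S \<in> carrier_mat n n" and sym: "S\<^sup>T = S"
  shows "sum_mat (S * S) = (\<Sum>l\<in>{0..<n}. (\<Sum>j\<in>{0..<n}. S $$ (l, j))\<^sup>2)"
proof -
  have "sum_mat (S * S) = (\<Sum>i\<in>{0..<n}. \<Sum>j\<in>{0..<n}. \<Sum>l\<in>{0..<n}. S $$ (i, l) * S $$ (l, j))"
    using S by (auto simp: sum_mat_carrier[of _ n n] scalar_prod_def intro!: sum.cong)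
  also have "\<dots> = (\<Sum>i\<in>{0..<n}. \<Sum>l\<in>{0..<n}. \<Sum>j\<in>{0..<n}. S $$ (i, l) * S $$ (l, j))"
    by (intro sum.cong refl sum.swap)
  also have "\<dots> = (\<Sum>l\<in>{0..<n}. \<Sum>i\<in>{0..<n}. \<Sum>j\<in>{0..<n}. S $$ (i, l) * S $$ (l, j))"
    by (rule sum.swap)
  also have "\<dots> = (\<Sum>l\<in>{0..<n}. \<Sum>i\<in>{0..<n}. \<Sum>j\<in>{0..<n}. S $$ (l, i) * S $$ (l, j))"
    using symmetric_mat_entry[OF S sym] by (intro sum.cong refl) auto
  also have "\<dots> = (\<Sum>l\<in>{0..<n}. (\<Sum>j\<in>{0..<n}. S $$ (l, j))\<^sup>2)"
    by (simp add: power2_eq_square sum_product)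
  finally show ?thesis .
qed

lemma trace_mult_self_symmetric:
  fixes S :: "'a::comm_semiring_1 mat"
  assumes S: "S \<in> carrier_mat n n" and sym: "S\<^sup>T = S"
  shows "trace (S * S) = (\<Sum>l\<in>{0..<n}. \<Sum>j\<in>{0..<n}. (S $$ (l, j))\<^sup>2)"
  using S symmetric_mat_entry[OF S sym]
  by (auto simp: trace_def scalar_prod_def power2_eq_square intro!: sum.cong)

lemma sum_mat_squared_le:
  fixes S :: "real mat"
  assumes S: "S \<in> carrier_mat n n" and sym: "S\<^sup>T = S"
  shows "(sum_mat S)\<^sup>2 \<le> real n * sum_mat (S * S)"
  using sum_squared_le_sum_of_squares[of "\<lambda>l. \<Sum>j\<in>{0..<n}. S $$ (l, j)" "{0..<n}"]
  by (simp add: sum_mat_carrier[OF S] sum_mat_mult_self_symmetric[OF S sym] mult.commute)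

lemma sum_mat_mult_self_le_trace:
  fixes S :: "real mat"
  assumes S: "S \<in> carrier_mat n n" and sym: "S\<^sup>T = S"
  shows "sum_mat (S * S) \<le> real n * trace (S * S)"
proof -
  have "sum_mat (S * S) \<le> (\<Sum>l\<in>{0..<n}. real n * (\<Sum>j\<in>{0..<n}. (S $$ (l, j))\<^sup>2))"
    unfolding sum_mat_mult_self_symmetric[OF S sym]
    using sum_squared_le_sum_of_squares[of "\<lambda>j. S $$ (_, j)" "{0..<n}"]
    by (intro sum_mono) (simp add: mult.commute)
  then show ?thesis
    by (simp add: trace_mult_self_symmetric[OF S sym] sum_distrib_left)
qed

lemma sum_mat_two_pow_ge:
  fixes A :: "real mat"
  assumes A: "A \<in> carrier_mat n n" and sym: "A\<^sup>T = A" and "0 < n" and "0 \<le> sum_mat A"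
  shows "real n * (sum_mat A / n) ^ (2 ^ k) \<le> sum_mat (A ^\<^sub>m (2 ^ k))"
proof (induction k)
  case 0
  then show ?case
    using A \<open>0 < n\<close> by simp
next
  case (Suc k)
  let ?S = "A ^\<^sub>m (2 ^ k)"
  have S: "?S \<in> carrier_mat n n" "?S\<^sup>T = ?S"
    using A sym by (simp_all add: transpose_pow_mat)
  have "(real n * (sum_mat A / n) ^ (2 ^ k))\<^sup>2 \<le> (sum_mat ?S)\<^sup>2"
    using Suc \<open>0 \<le> sum_mat A\<close> by (intro power_mono) auto
  also have "\<dots> \<le> real n * sum_mat (?S * ?S)"
    by (rule sum_mat_squared_le[OF S])
  also have "?S * ?S = A ^\<^sub>m (2 ^ Suc k)"
    using pow_mat_add[OF A, of "2 ^ k" "2 ^ k"] by (simp add: mult_2)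
  also have "(real n * (sum_mat A / n) ^ (2 ^ k))\<^sup>2 = real n * (real n * (sum_mat A / n) ^ (2 ^ Suc k))"
    by (simp add: power_mult_distrib power2_eq_square flip: power_add mult_2)
  finally have "real n * (real n * (sum_mat A / n) ^ (2 ^ Suc k)) \<le> real n * sum_mat (A ^\<^sub>m (2 ^ Suc k))" .
  then show ?case
    using \<open>0 < n\<close> by simp
qed

lemma sum_mat_even_pow_le:
  fixes A :: "real mat"
  assumes A: "A \<in> carrier_mat n n" and sym: "A\<^sup>T = A"
    and cp: "char_poly A = (\<Prod>e\<leftarrow>es. [:- e, 1:])" and bound: "\<And>e. e \<in> set es \<Longrightarrow> \<bar>e\<bar> \<le> r"
  shows "sum_mat (A ^\<^sub>m (2 * k)) \<le> real n * (real n * r ^ (2 * k))"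
proof -
  let ?S = "A ^\<^sub>m k"
  have S: "?S \<in> carrier_mat n n" "?S\<^sup>T = ?S"
    using A sym by (simp_all add: transpose_pow_mat)
  have "A ^\<^sub>m (2 * k) = ?S * ?S"
    using pow_mat_add[OF A, of k k] by (simp add: mult_2)
  then have "sum_mat (A ^\<^sub>m (2 * k)) \<le> real n * trace (A ^\<^sub>m (2 * k))"
    using sum_mat_mult_self_le_trace[OF S] by simp
  also have "trace (A ^\<^sub>m (2 * k)) = (\<Sum>e\<leftarrow>es. \<bar>e\<bar> ^ (2 * k))"
    by (simp add: spectral_invariants(3)[OF A cp] power_even_abs)
  also have "\<dots> \<le> (\<Sum>e\<leftarrow>es. r ^ (2 * k))"
    using bound by (intro sum_list_mono power_mono) auto
  also have "\<dots> = real n * r ^ (2 * k)"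
    by (simp add: sum_list_triv spectral_invariants(1)[OF A cp])
  finally show ?thesis
    by (simp add: mult_left_mono)
qed

(* Stands in for the Rayleigh quotient bound 1'A1 <= n lambda_max, which would need the spectral
   theorem: with d = sum_mat A / n, d^m <= n r^m holds for every m = 2^k, and the factor n is
   irrelevant as m grows. *)
lemma sum_mat_le_dim_mult_eigenvalue_bound:
  fixes A :: "real mat"
  assumes A: "A \<in> carrier_mat n n" and sym: "A\<^sup>T = A"
    and cp: "char_poly A = (\<Prod>e\<leftarrow>es. [:- e, 1:])" and bound: "\<And>e. e \<in> set es \<Longrightarrow> \<bar>e\<bar> \<le> r"
  shows "sum_mat A \<le> real n * r"
proof (cases "n = 0")
  case True
  then show ?thesis
    using A by (simp add: sum_mat_carrier)
next
  case False
  then obtain e where "e \<in> set es"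
    using spectral_invariants(1)[OF A cp] by (cases es) auto
  then have "0 \<le> r"
    using bound[of e] by simp
  show ?thesis
  proof (cases "sum_mat A \<le> 0")
    case True
    moreover have "0 \<le> real n * r"
      using \<open>0 \<le> r\<close> by simp
    ultimately show ?thesis
      by linarith
  next
    case positive: False
    define d where "d = sum_mat A / n"
    have "\<exists>\<^sub>F m in sequentially. d ^ m \<le> real n * r ^ m"
      unfolding frequently_sequentially
    proof (intro allI exI conjI)
      fix N :: nat
      show "N \<le> 2 * 2 ^ N"
        using less_exp[of N] by linarith
      have "real n * d ^ (2 * 2 ^ N) \<le> sum_mat (A ^\<^sub>m (2 * 2 ^ N))"
        using sum_mat_two_pow_ge[OF A sym, of "Suc N"] False positive by (simp add: d_def)
      also have "\<dots> \<le> real n * (real n * r ^ (2 * 2 ^ N))"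
        by (rule sum_mat_even_pow_le[OF A sym cp bound])
      finally show "d ^ (2 * 2 ^ N) \<le> real n * r ^ (2 * 2 ^ N)"
        using False by simp
    qed
    then have "d \<le> r"
      by (rule le_if_frequently_power_le[OF \<open>0 \<le> r\<close>])
    then show ?thesis
      using False by (simp add: d_def pos_divide_le_eq mult.commute)
  qed
qed

section \<open>Adjacency matrices\<close>

lemma adj_matrix_carrier: "adj_matrix n E \<in> carrier_mat n n"
  by (simp add: adj_matrix_def)

lemma transpose_adj_matrix:
  assumes "simple_graph n E"
  shows "(adj_matrix n E)\<^sup>T = adj_matrix n E"
  using assms unfolding simple_graph_def adj_matrix_def by (intro eq_matI) auto

lemma sum_mat_adj_matrix:
  assumes G: "simple_graph n E"
  shows "sum_mat (adj_matrix n E) = 2 * real (num_edges n E)"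
proof -
  define U where "U = {(i, j). i < j \<and> j < n \<and> E i j}"
  have "finite U"
    by (rule finite_subset[of _ "{0..<n} \<times> {0..<n}"]) (auto simp: U_def)
  have arcs: "{p \<in> {0..<n} \<times> {0..<n}. E (fst p) (snd p)} = U \<union> prod.swap ` U"
    using G unfolding simple_graph_def U_def by (auto simp: image_iff) (metis linorder_neqE_nat)
  have "sum_mat (adj_matrix n E) = (\<Sum>p\<in>{0..<n} \<times> {0..<n}. if E (fst p) (snd p) then 1 else 0)"
    by (auto simp: sum_mat_def adj_matrix_def intro!: sum.cong)
  also have "\<dots> = real (card (U \<union> prod.swap ` U))"
    by (simp add: sum.If_cases arcs[symmetric] Int_def)
  also have "card (U \<union> prod.swap ` U) = card U + card U"
    using \<open>finite U\<close> by (subst card_Un_disjoint) (auto simp: U_def card_image)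
  finally show ?thesis
    by (simp add: U_def num_edges_def)
qed

lemma trace_square_adj_matrix:
  assumes "simple_graph n E"
  shows "trace (adj_matrix n E * adj_matrix n E) = sum_mat (adj_matrix n E)"
proof -
  let ?A = "adj_matrix n E"
  have "trace (?A * ?A) = (\<Sum>i\<in>{0..<n}. \<Sum>j\<in>{0..<n}. (?A $$ (i, j))\<^sup>2)"
    by (rule trace_mult_self_symmetric[OF adj_matrix_carrier transpose_adj_matrix[OF assms]])
  also have "\<dots> = (\<Sum>i\<in>{0..<n}. \<Sum>j\<in>{0..<n}. ?A $$ (i, j))"
    by (intro sum.cong refl) (simp add: adj_matrix_def)
  finally show ?thesis
    by (simp only: sum_mat_carrier[OF adj_matrix_carrier])
qed

lemma abs_det_adj_matrix_ge_1:
  assumes "det (adj_matrix n E) \<noteq> 0"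
  shows "1 \<le> \<bar>det (adj_matrix n E)\<bar>"
proof -
  define B :: "int mat" where "B = mat n n (\<lambda>(i, j). if E i j then 1 else 0)"
  have "adj_matrix n E = map_mat of_int B"
    unfolding B_def adj_matrix_def by (intro eq_matI) auto
  then have det: "det (adj_matrix n E) = of_int (det B)"
    by (simp add: of_int_hom.hom_det)
  with assms have "1 \<le> \<bar>det B\<bar>"
    by linarith
  then show ?thesis
    unfolding det by linarith
qed

lemma adj_matrix_spectrum:
  assumes G: "simple_graph n E" and es: "eigenvalue_list (adj_matrix n E) es"
  shows "length es = n" and "prod_list es = det (adj_matrix n E)"
    and "(\<Sum>e\<leftarrow>es. e\<^sup>2) = 2 * real (num_edges n E)"
    and "2 * real (num_edges n E) \<le> real n * mu1 es"
proof -
  note A = adj_matrix_carrier[of n E] and cp = es[unfolded eigenvalue_list_def]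
  show "length es = n" "prod_list es = det (adj_matrix n E)"
    using spectral_invariants[OF A cp] by simp_all
  have "(\<Sum>e\<leftarrow>es. e\<^sup>2) = trace (adj_matrix n E ^\<^sub>m 2)"
    using spectral_invariants(3)[OF A cp, of 2] by simp
  also have "adj_matrix n E ^\<^sub>m 2 = adj_matrix n E * adj_matrix n E"
    using A by (simp add: numeral_2_eq_2)
  finally show "(\<Sum>e\<leftarrow>es. e\<^sup>2) = 2 * real (num_edges n E)"
    using trace_square_adj_matrix[OF G] sum_mat_adj_matrix[OF G] by simp
  show "2 * real (num_edges n E) \<le> real n * mu1 es"
    using sum_mat_le_dim_mult_eigenvalue_bound[OF A transpose_adj_matrix[OF G] cp abs_le_mu1]
    by (simp add: sum_mat_adj_matrix[OF G])
qed

theorem corollary3p1: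
  fixes n :: nat and E :: "nat \<Rightarrow> nat \<Rightarrow> bool" and es :: "real list"
  assumes "simple_graph n E"
    and "n \<ge> 2"
    and "det (adj_matrix n E) \<noteq> 0"
    and "eigenvalue_list (adj_matrix n E) es"
    and "(mu1 es - 2 * real (num_edges n E) / real n)
          + (2 * real (num_edges n E) - real n + 1 - (mu1 es)^2) / (2 * mu2 es + 1)
          \<ge> (2 * mu2 es) / (2 * mu2 es + 1) * ln (mu1 es)"
    and "\<not> graph_iso n E 4 P4"
    and "\<not> graph_iso n E 4 paw"
  shows "energy es \<ge> real n - 1 + 2 * real (num_edges n E) / real n"
proof -
  note spectrum = adj_matrix_spectrum[OF assms(1,4)]
  obtain rest where shape: "abs_desc es = mu1 es # mu2 es # rest"
    and rest: "\<forall>x\<in>set rest. x \<le> mu2 es"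
    using abs_desc_Cons_Cons spectrum(1) \<open>n \<ge> 2\<close> by metis
  define xs where "xs = mu2 es # rest"
  have "0 \<notin> set es"
    using assms(3) spectrum(2) by (metis prod_list_zero_iff)
  then have "0 < x" if "x \<in> set (abs_desc es)" for x
    using that by (auto simp: set_abs_desc)
  then have xs: "0 < x \<and> x \<le> mu2 es" if "x \<in> set xs" for x
    using that rest by (auto simp: shape xs_def)
  have prod: "1 \<le> mu1 es * prod_list xs"
    using prod_list_abs_desc[of es] abs_det_adj_matrix_ge_1[OF assms(3)] spectrum(2)
    by (simp add: shape xs_def)
  have squares: "(mu1 es)\<^sup>2 + (\<Sum>x\<leftarrow>xs. x\<^sup>2) = 2 * real (num_edges n E)"
    using sum_list_power_abs_desc[where es = es and k = 2] spectrum(3) by (simp add: shape xs_def)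
  have len: "n = length xs + 1"
    using spectrum(1) arg_cong[OF shape, of length] by (simp add: abs_desc_def xs_def)
  have avg: "2 * real (num_edges n E) / n \<le> mu1 es"
    using spectrum(4) \<open>n \<ge> 2\<close> by (simp add: pos_divide_le_eq mult.commute)
  have "0 \<le> mu2 es"
    using xs[of "mu2 es"] by (simp add: xs_def)
  from sum_lower_bound_of_product_and_squares[OF xs this prod squares len avg assms(5)]
  have "real n - 1 + 2 * real (num_edges n E) / n \<le> mu1 es + sum_list xs" .
  then show ?thesis
    by (simp add: energy_eq_sum_list_abs_desc shape xs_def)
qed

end
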